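(* In the setting below, let $z_0=(u_0,v_0)$ be a singular point of $P$ with $k_1\neq0$. Then the determinant of the Hessian $H(z_0)$ of $\hat R$ with respect to the variables $(\theta_1',r_2',\theta_2')$ at $z_0$ is $$\det H(z_0)=-\frac{4(p-1)(q-1)|\mu|^2}{k_1^2\cos\Theta_2}\,\phi(z_0),\qquad \phi(z_0)=(-1)^\kappa(p-1)|v_0|\sin\Theta_3+(q-1)|\mu||u_0|\sin\Theta_1.$$
   Context: Fix integers $p,q\ge2$ and $\mu\in\mathbb{C}\setminus\{0\}$. Let $P(u,v;\mu)=\mu(u^p+\bar u)+v^q+\bar v$, regarded as a smooth map $\mathbb{R}^4\to\mathbb{R}^2$, with $Q=\operatorname{Re}P$, $R=\operatorname{Im}P$. A singular point is a point where the real differential of $P$ has rank $<2$; every singular point $z_0=(u_0,v_0)$ satisfies $u_0v_0\ne0$. Use polar coordinates $r_1=|u|,\theta_1=\arg u,r_2=|v|,\theta_2=\arg v$ near $z_0$. Fix real representatives $\arg u_0,\arg v_0,\arg\mu$ and an integer $\kappa$ with $\frac{p-1}{2}\arg u_0+\arg\mu=\frac{q-1}{2}\arg v_0+\kappa\pi$. Set $\Theta_1=\frac{p+1}{2}\arg u_0$, $\Theta_2=\frac{p-1}{2}\arg u_0+\arg\mu$, $\Theta_3=\frac{q+1}{2}\arg v_0$, $\Theta_4=\frac{q-1}{2}\arg v_0$, and $(k_1,k_2,k_3,k_4)=(\partial_{r_1}Q,\partial_{\theta_1}Q,\partial_{r_2}Q,\partial_{\theta_2}Q)(z_0)$. When $k_1\ne0$,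 define new coordinates $(r_1',\theta_1',r_2',\theta_2')=(k_1r_1+k_2\theta_1+k_3r_2+k_4\theta_2,\theta_1,r_2,\theta_2)$ near $z_0$, let $s=\frac{\partial R}{\partial r_1'}(z_0)$ and $\hat R=R-sQ$. *)

theory Defs
  imports "HOL-Analysis.Analysis"
begin

definition Pc :: "nat \<Rightarrow> nat \<Rightarrow> complex \<Rightarrow> complex \<Rightarrow> complex \<Rightarrow> complex" where
  "Pc p q \<mu> u v = \<mu> * (u ^ p + cnj u) + v ^ q + cnj v"

definition PR :: "nat \<Rightarrow> nat \<Rightarrow> complex \<Rightarrow> real^4 \<Rightarrow> real^2" where
  "PR p q \<mu> x = (let w = Pc p q \<mu> (Complex (x$1) (x$2)) (Complex (x$3) (x$4))
                  in vector [Re w, Im w])"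

definition singular_point :: "nat \<Rightarrow> nat \<Rightarrow> complex \<Rightarrow> complex \<Rightarrow> complex \<Rightarrow> bool" where
  "singular_point p q \<mu> u v \<longleftrightarrow>
     rank (matrix (frechet_derivative (PR p q \<mu>) (at (vector [Re u, Im u, Re v, Im v])))) < 2"

definition Ppol :: "nat \<Rightarrow> nat \<Rightarrow> complex \<Rightarrow> real^4 \<Rightarrow> complex" where
  "Ppol p q \<mu> x = Pc p q \<mu> (of_real (x$1) * cis (x$2)) (of_real (x$3) * cis (x$4))"

definition pd :: "(real^4 \<Rightarrow> real) \<Rightarrow> 4 \<Rightarrow> real^4 \<Rightarrow> real" where
  "pd f i x = deriv (\<lambda>t. f (x + t *\<^sub>R axis i 1)) 0"

text \<open>Inverse of the coordinate change
  (r1',th1',r2',th2') = (k1 r1 + k2 th1 + k3 r2 + k4 th2, th1, r2, th2):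
  maps new coordinates to old (polar) coordinates.\<close>
definition newcoord_inv :: "real^4 \<Rightarrow> real^4 \<Rightarrow> real^4" where
  "newcoord_inv k y = vector [(y$1 - k$2 * y$2 - k$3 * y$3 - k$4 * y$4) / k$1, y$2, y$3, y$4]"

definition Qpol :: "nat \<Rightarrow> nat \<Rightarrow> complex \<Rightarrow> real^4 \<Rightarrow> real" where
  "Qpol p q \<mu> x = Re (Ppol p q \<mu> x)"

definition kvec :: "nat \<Rightarrow> nat \<Rightarrow> complex \<Rightarrow> real^4 \<Rightarrow> real^4" where
  "kvec p q \<mu> z = (\<chi> i. pd (Qpol p q \<mu>) i z)"

definition newcoord :: "real^4 \<Rightarrow> real^4 \<Rightarrow> real^4" where
  "newcoord k x = vector [k$1 * x$1 + k$2 * x$2 + k$3 * x$3 + k$4 * x$4, x$2, x$3, x$4]"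

definition Qnew :: "nat \<Rightarrow> nat \<Rightarrow> complex \<Rightarrow> real^4 \<Rightarrow> real^4 \<Rightarrow> real" where
  "Qnew p q \<mu> k y = Re (Ppol p q \<mu> (newcoord_inv k y))"

definition Rnew :: "nat \<Rightarrow> nat \<Rightarrow> complex \<Rightarrow> real^4 \<Rightarrow> real^4 \<Rightarrow> real" where
  "Rnew p q \<mu> k y = Im (Ppol p q \<mu> (newcoord_inv k y))"

definition Rhat :: "nat \<Rightarrow> nat \<Rightarrow> complex \<Rightarrow> real^4 \<Rightarrow> real^4 \<Rightarrow> real" where
  "Rhat p q \<mu> z y =
     (let k = kvec p q \<mu> z; s = pd (Rnew p q \<mu> k) 1 (newcoord k z)
      in Rnew p q \<mu> k y - s * Qnew p q \<mu> k y)"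

text \<open>Hessian of R-hat w.r.t. (th1', r2', th2') (new coordinates 2,3,4) at z0.\<close>
definition hessRhat :: "nat \<Rightarrow> nat \<Rightarrow> complex \<Rightarrow> real^4 \<Rightarrow> real^3^3" where
  "hessRhat p q \<mu> z =
     (let k = kvec p q \<mu> z; z' = newcoord k z; f = Rhat p q \<mu> z;
          h = (\<lambda>i j. pd (pd f j) i z')
      in vector [vector [h 2 2, h 2 3, h 2 4],
                 vector [h 3 2, h 3 3, h 3 4],
                 vector [h 4 2, h 4 3, h 4 4]])"

end

theory Submission
  imports Defs
begin

text \<open>
  The \<open>2 \<times> 2\<close> minor of the real Jacobian of \<open>P\<close> in the \<open>u\<close>-columns is
  \<open>|\<mu>|\<^sup>2 (|p u\<^sup>p\<^sup>-\<^sup>1|\<^sup>2 - 1)\<close>, and similarly for \<open>v\<close>, so a singular point has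
  \<open>p |u\<^sub>0|\<^sup>p\<^sup>-\<^sup>1 = 1 = q |v\<^sub>0|\<^sup>q\<^sup>-\<^sup>1\<close>. With the phase relation defining \<open>\<kappa>\<close>, this makes
  every first order polar derivative of \<open>P\<close> at \<open>z\<^sub>0\<close> a real multiple of \<open>e\<^sup>i\<^sup>\<Theta>\<^sup>2\<close>.
  Hence \<open>k\<close> is \<open>cos \<Theta>\<^sub>2\<close> times a real vector, \<open>s = tan \<Theta>\<^sub>2\<close>, and
  \<open>R\<^sup>^ = Im (e\<^sup>-\<^sup>i\<^sup>\<Theta>\<^sup>2 P) / cos \<Theta>\<^sub>2\<close>. Its Hessian in the new coordinates is thus the
  pull-back, under the linear change of coordinates, of a block diagonal form made of the second
  polar derivatives of \<open>P\<close>, and the \<open>3 \<times> 3\<close> determinant is then a direct computation.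
\<close>

lemma vector_4 [simp]:
  "(vector [a,b,c,d] :: ('a::zero)^4)$1 = a"
  "(vector [a,b,c,d] :: ('a::zero)^4)$2 = b"
  "(vector [a,b,c,d] :: ('a::zero)^4)$3 = c"
  "(vector [a,b,c,d] :: ('a::zero)^4)$4 = d"
  unfolding vector_def by simp_all

lemma axis_4 [simp]:
  "axis (1::4) (1::real) = vector [1,0,0,0]"
  "axis (2::4) (1::real) = vector [0,1,0,0]"
  "axis (3::4) (1::real) = vector [0,0,1,0]"
  "axis (4::4) (1::real) = vector [0,0,0,1]"
  by (auto simp: vec_eq_iff forall_4 axis_def)

section \<open>Polar derivatives of \<open>P\<close>\<close>

lemma Ppol_polar:
  "Ppol p q \<mu> x = \<mu> * (of_real (x$1)^p * cis (real p * x$2) + of_real (x$1) * cis (- x$2))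
     + of_real (x$3)^q * cis (real q * x$4) + of_real (x$3) * cis (- x$4)"
  unfolding Ppol_def Pc_def by (simp add: power_mult_distrib Complex.DeMoivre cis_cnj)

lemma has_vector_derivative_polar_monomial:
  "((\<lambda>t. complex_of_real (a + t*b)^n * cis (m*(c + t*e))) has_vector_derivative
     (cis (m*c) * (of_real b * of_nat n * of_real a^(n-1) + \<i> * of_real m * of_real e * of_real a^n))) (at 0)"
proof -
  define g where "g = (\<lambda>w. (of_real a + w * of_real b)^n * exp (\<i> * of_real m * (of_real c + w * of_real e)))"
  have "(g has_field_derivative (cis (m*c) * (of_real b * of_nat n * of_real a^(n-1) + \<i> * of_real m * of_real e * of_real a^n))) (at (of_real 0))"
    unfolding g_def by (auto intro!: derivative_eq_intros simp: cis_conv_exp algebra_simps)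
  from has_vector_derivative_real_field[OF this]
  show ?thesis unfolding g_def by (simp add: cis_conv_exp algebra_simps)
qed

text \<open>Directional derivatives of \<open>Ppol\<close>, grouped by the four phase factors of \<open>P\<close>: at a
  singular point each of these is \<open>e\<^sup>i\<^sup>\<Theta>\<^sup>2\<close> times a real multiple of a unit complex number.\<close>

definition dPpol :: "nat \<Rightarrow> nat \<Rightarrow> complex \<Rightarrow> real^4 \<Rightarrow> real^4 \<Rightarrow> complex" where
  "dPpol p q \<mu> x d =
     (\<mu> * cis (real p * x$2)) * (of_real (d$1 * (real p * (x$1)^(p-1))) + \<i> * of_real (d$2 * (real p * (x$1)^p)))
   + (\<mu> * cis (- x$2)) * (of_real (d$1) + \<i> * of_real (- d$2 * x$1))
   + cis (real q * x$4) * (of_real (d$3 * (real q * (x$3)^(q-1))) + \<i> * of_real (d$4 * (real q * (x$3)^q)))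
   + cis (- x$4) * (of_real (d$3) + \<i> * of_real (- d$4 * x$3))"

definition d2Ppol :: "nat \<Rightarrow> nat \<Rightarrow> complex \<Rightarrow> real^4 \<Rightarrow> real^4 \<Rightarrow> real^4 \<Rightarrow> complex" where
  "d2Ppol p q \<mu> x e d =
     (\<mu> * cis (real p * x$2)) * (of_real (d$1*e$1*(real p * real (p-1) * (x$1)^(p-2)) - d$2*e$2*(real p * real p * (x$1)^p)) + \<i> * of_real ((d$1*e$2 + d$2*e$1)*(real p * real p * (x$1)^(p-1))))
   + (\<mu> * cis (- x$2)) * (of_real (- d$2*e$2*x$1) + \<i> * of_real (- (d$1*e$2 + d$2*e$1)))
   + cis (real q * x$4) * (of_real (d$3*e$3*(real q * real (q-1) * (x$3)^(q-2)) - d$4*e$4*(real q * real q * (x$3)^q)) + \<i> * of_real ((d$3*e$4 + d$4*e$3)*(real q * real q * (x$3)^(q-1))))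
   + cis (- x$4) * (of_real (- d$4*e$4*x$3) + \<i> * of_real (- (d$3*e$4 + d$4*e$3)))"

lemma has_vector_derivative_Ppol_line:
  "((\<lambda>t. Ppol p q \<mu> (x + t *\<^sub>R d)) has_vector_derivative dPpol p q \<mu> x d) (at 0)"
proof -
  have polar_monomials: "(\<lambda>t. Ppol p q \<mu> (x + t *\<^sub>R d)) = (\<lambda>t. \<mu> * (complex_of_real (x$1 + t*d$1)^p * cis (real p*(x$2 + t*d$2))
        + complex_of_real (x$1 + t*d$1)^1 * cis ((-1)*(x$2 + t*d$2)))
      + complex_of_real (x$3 + t*d$3)^q * cis (real q*(x$4 + t*d$4))
        + complex_of_real (x$3 + t*d$3)^1 * cis ((-1)*(x$4 + t*d$4)))"
    by (simp add: Ppol_polar)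
  show ?thesis
    unfolding polar_monomials
    by (rule has_vector_derivative_eq_rhs,
        (rule has_vector_derivative_add has_vector_derivative_mult_right
          has_vector_derivative_polar_monomial)+,
        simp add: dPpol_def algebra_simps)
qed

lemma has_vector_derivative_dPpol_line:
  "((\<lambda>t. dPpol p q \<mu> (x + t *\<^sub>R e) d) has_vector_derivative d2Ppol p q \<mu> x e d) (at 0)"
proof -
  have polar_monomials: "(\<lambda>t. dPpol p q \<mu> (x + t *\<^sub>R e) d) = (\<lambda>t. \<mu> * (
          (of_real (d$1) * of_nat p) * (complex_of_real (x$1 + t*e$1)^(p-1) * cis (real p*(x$2 + t*e$2)))
        + (\<i> * of_nat p * of_real (d$2)) * (complex_of_real (x$1 + t*e$1)^p * cis (real p*(x$2 + t*e$2)))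
        + of_real (d$1) * (complex_of_real (x$1 + t*e$1)^0 * cis ((-1)*(x$2 + t*e$2)))
        + (- \<i> * of_real (d$2)) * (complex_of_real (x$1 + t*e$1)^1 * cis ((-1)*(x$2 + t*e$2))))
      + ((of_real (d$3) * of_nat q) * (complex_of_real (x$3 + t*e$3)^(q-1) * cis (real q*(x$4 + t*e$4)))
        + (\<i> * of_nat q * of_real (d$4)) * (complex_of_real (x$3 + t*e$3)^q * cis (real q*(x$4 + t*e$4)))
        + of_real (d$3) * (complex_of_real (x$3 + t*e$3)^0 * cis ((-1)*(x$4 + t*e$4)))
        + (- \<i> * of_real (d$4)) * (complex_of_real (x$3 + t*e$3)^1 * cis ((-1)*(x$4 + t*e$4)))))"
    by (simp add: dPpol_def algebra_simps fun_eq_iff)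
  show ?thesis
    unfolding polar_monomials
    by (rule has_vector_derivative_eq_rhs,
        (rule has_vector_derivative_add has_vector_derivative_mult_right
          has_vector_derivative_polar_monomial)+,
        simp add: d2Ppol_def algebra_simps numeral_2_eq_2)
qed

lemma pd_Im_Ppol_linear:
  assumes "linear A"
  shows "pd (\<lambda>y. Im (c * Ppol p q \<mu> (A y))) i y = Im (c * dPpol p q \<mu> (A y) (A (axis i 1)))"
proof -
  have "((\<lambda>t. Im (c * Ppol p q \<mu> (A y + t *\<^sub>R A (axis i 1)))) has_field_derivative
      Im (c * dPpol p q \<mu> (A y) (A (axis i 1)))) (at 0)"
    by (intro has_field_derivative_Im has_vector_derivative_mult_right has_vector_derivative_Ppol_line)
  then show ?thesis
    unfolding pd_def linear_add[OF assms] linear_scale[OF assms] by (rule DERIV_imp_deriv)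
qed

lemma pd_Im_dPpol_linear:
  assumes "linear A"
  shows "pd (\<lambda>y. Im (c * dPpol p q \<mu> (A y) d)) i y = Im (c * d2Ppol p q \<mu> (A y) (A (axis i 1)) d)"
proof -
  have "((\<lambda>t. Im (c * dPpol p q \<mu> (A y + t *\<^sub>R A (axis i 1)) d)) has_field_derivative
      Im (c * d2Ppol p q \<mu> (A y) (A (axis i 1)) d)) (at 0)"
    by (intro has_field_derivative_Im has_vector_derivative_mult_right has_vector_derivative_dPpol_line)
  then show ?thesis
    unfolding pd_def linear_add[OF assms] linear_scale[OF assms] by (rule DERIV_imp_deriv)
qed

section \<open>Moduli at a singular point\<close>

lemma PR_differentiable: "PR p q \<mu> differentiable (at X)"
proof -
  have PR_eq: "PR p q \<mu> = (\<lambda>x. Re (Pc p q \<mu> (of_real (x$1) + \<i> * of_real (x$2)) (of_real (x$3) + \<i> * of_real (x$4))) *\<^sub>R axis 1 1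
     + Im (Pc p q \<mu> (of_real (x$1) + \<i> * of_real (x$2)) (of_real (x$3) + \<i> * of_real (x$4))) *\<^sub>R axis 2 1)"
    by (auto simp: fun_eq_iff PR_def vec_eq_iff forall_2 axis_def Let_def Complex_eq)
  show ?thesis
    unfolding PR_eq Pc_def differentiable_def
    by (rule exI, (rule derivative_intros bounded_linear.has_derivative[OF bounded_linear_vec_nth]
          bounded_linear.has_derivative[OF bounded_linear_of_real])+)
qed

lemma has_vector_derivative_Pc_line:
  "((\<lambda>t. Pc p q \<mu> (u0 + of_real t * du) (v0 + of_real t * dv)) has_vector_derivative
     (\<mu> * (of_nat p * u0^(p-1) * du + cnj du) + (of_nat q * v0^(q-1) * dv + cnj dv))) (at 0)"
proof -
  define g where "g = (\<lambda>w. \<mu> * ((u0 + w*du)^p + (cnj u0 + w * cnj du)) + ((v0 + w*dv)^q + (cnj v0 + w * cnj dv)))"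
  have "(g has_field_derivative (\<mu> * (of_nat p * u0^(p-1) * du + cnj du) + (of_nat q * v0^(q-1) * dv + cnj dv))) (at (of_real 0))"
    unfolding g_def by (auto intro!: derivative_eq_intros)
  from has_vector_derivative_real_field[OF this]
  show ?thesis unfolding g_def Pc_def by (simp add: algebra_simps)
qed

lemma has_vector_derivative_line_has_derivative:
  assumes "(f has_derivative f') (at X)"
  shows "((\<lambda>t. f (X + t *\<^sub>R e)) has_vector_derivative f' e) (at 0)"
proof -
  have "((\<lambda>t. X + t *\<^sub>R e) has_derivative (\<lambda>t. t *\<^sub>R e)) (at 0)"
    by (auto intro!: derivative_eq_intros)
  from has_derivative_compose[OF this] assms
  have "((\<lambda>t. f (X + t *\<^sub>R e)) has_derivative (\<lambda>t. f' (t *\<^sub>R e))) (at 0)" by simp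
  moreover have "linear f'" using assms has_derivative_linear by blast
  ultimately show ?thesis unfolding has_vector_derivative_def by (simp add: linear_scale)
qed

lemma PR_derivative_apply:
  assumes fd: "(PR p q \<mu> has_derivative f') (at X)"
    and cu: "\<And>t. Complex ((X + t *\<^sub>R e)$1) ((X + t *\<^sub>R e)$2) = u0 + of_real t * du"
    and cv: "\<And>t. Complex ((X + t *\<^sub>R e)$3) ((X + t *\<^sub>R e)$4) = v0 + of_real t * dv"
  defines "D \<equiv> \<mu> * (of_nat p * u0^(p-1) * du + cnj du) + (of_nat q * v0^(q-1) * dv + cnj dv)"
  shows "f' e $ 1 = Re D" "f' e $ 2 = Im D"
proof -
  have line: "PR p q \<mu> (X + t *\<^sub>R e) = vector [Re (Pc p q \<mu> (u0 + of_real t * du) (v0 + of_real t * dv)),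
      Im (Pc p q \<mu> (u0 + of_real t * du) (v0 + of_real t * dv))]" for t
    unfolding PR_def Let_def cu cv ..
  have P: "((\<lambda>t. Pc p q \<mu> (u0 + of_real t * du) (v0 + of_real t * dv)) has_vector_derivative D) (at 0)"
    unfolding D_def by (rule has_vector_derivative_Pc_line)
  have "((\<lambda>t. PR p q \<mu> (X + t *\<^sub>R e) $ i) has_vector_derivative f' e $ i) (at 0)" for i
    by (rule bounded_linear.has_vector_derivative[OF bounded_linear_vec_nth
          has_vector_derivative_line_has_derivative[OF fd]])
  hence d: "((\<lambda>t. PR p q \<mu> (X + t *\<^sub>R e) $ i) has_real_derivative f' e $ i) (at 0)" for i
    by (simp add: has_real_derivative_iff_has_vector_derivative)
  show "f' e $ 1 = Re D"
    using d[of 1] has_field_derivative_Re[OF P] unfolding line vector_2 by (rule DERIV_unique)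
  show "f' e $ 2 = Im D"
    using d[of 2] has_field_derivative_Im[OF P] unfolding line vector_2 by (rule DERIV_unique)
qed

lemma rank_lt_2_imp_minor_eq_0:
  fixes A :: "real^'n^2"
  assumes "rank A < 2"
  shows "A$1$a * A$2$b - A$1$b * A$2$a = 0"
proof -
  define S :: "real^2^'n" where "S = (\<chi> k j. if k = (if j = 1 then a else b) then 1 else 0)"
  have "rank (A ** S) < CARD(2)" using rank_mul_le_left[of A S] assms by simp
  hence "det (A ** S) = 0" by (simp add: det_eq_0_rank)
  moreover have "(A ** S) $ i $ j = A $ i $ (if j = 1 then a else b)" for i j
    by (simp add: matrix_matrix_mult_def S_def if_distrib[of "\<lambda>x. _ * x"] cong: if_cong)
  ultimately show ?thesis by (simp add: det_2)
qed

text \<open>The Jacobian determinant of the real-linear map \<open>w \<mapsto> \<mu> (a w + w\<^sup>*)\<close>.\<close>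

lemma Jacobian_det_mult_add_cnj:
  "Re (\<mu> * (a + 1)) * Im (\<mu> * (a * \<i> - \<i>)) - Re (\<mu> * (a * \<i> - \<i>)) * Im (\<mu> * (a + 1))
     = (cmod \<mu>)^2 * ((cmod a)^2 - 1)"
  unfolding cmod_power2 by (simp add: algebra_simps power2_eq_square)

lemma singular_point_moduli:
  assumes "singular_point p q \<mu> u0 v0" and "\<mu> \<noteq> 0"
  shows "real p * cmod u0^(p-1) = 1" and "real q * cmod v0^(q-1) = 1"
proof -
  define X :: "real^4" where "X = vector [Re u0, Im u0, Re v0, Im v0]"
  define f' where "f' = frechet_derivative (PR p q \<mu>) (at X)"
  have fd: "(PR p q \<mu> has_derivative f') (at X)"
    unfolding f'_def using PR_differentiable frechet_derivative_works by blast
  have rk: "rank (matrix f') < 2" using assms(1) unfolding singular_point_def f'_def X_def by simp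
  have A: "matrix f' $ i $ j = f' (axis j 1) $ i" for i j by (simp add: matrix_def)
  note col = PR_derivative_apply[OF fd]
  have "(cmod \<mu>)^2 * ((cmod (of_nat p * u0^(p-1)))^2 - 1) = 0"
    using rank_lt_2_imp_minor_eq_0[OF rk, of 1 2]
      col[of "axis 1 1" u0 1 v0 0] col[of "axis 2 1" u0 \<i> v0 0]
    unfolding A Jacobian_det_mult_add_cnj[symmetric] by (simp add: X_def complex_eq_iff)
  hence "cmod (of_nat p * u0^(p-1)) = 1"
    using assms(2) by (simp add: power2_eq_1_iff) (smt (verit) norm_ge_zero)
  then show "real p * cmod u0^(p-1) = 1" by (simp add: norm_mult norm_power)
  have "(cmod 1)^2 * ((cmod (of_nat q * v0^(q-1)))^2 - 1) = 0"
    using rank_lt_2_imp_minor_eq_0[OF rk, of 3 4]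
      col[of "axis 3 1" u0 0 v0 1] col[of "axis 4 1" u0 0 v0 \<i>]
    unfolding A Jacobian_det_mult_add_cnj[symmetric] by (simp add: X_def complex_eq_iff)
  hence "cmod (of_nat q * v0^(q-1)) = 1"
    by (simp add: power2_eq_1_iff) (smt (verit) norm_ge_zero)
  then show "real q * cmod v0^(q-1) = 1" by (simp add: norm_mult norm_power)
qed

section \<open>The Hessian of \<open>R\<^sup>^\<close> in the new coordinates\<close>

lemma linear_newcoord_inv: "linear (newcoord_inv k)"
  unfolding linear_iff
  by (simp add: newcoord_inv_def vec_eq_iff forall_4 field_simps add_divide_distrib diff_divide_distrib)

lemma newcoord_inv_axis:
  "newcoord_inv k (axis 1 1) = vector [1/k$1, 0, 0, 0]"
  "newcoord_inv k (axis 2 1) = vector [-(k$2/k$1), 1, 0, 0]"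
  "newcoord_inv k (axis 3 1) = vector [-(k$3/k$1), 0, 1, 0]"
  "newcoord_inv k (axis 4 1) = vector [-(k$4/k$1), 0, 0, 1]"
  by (simp_all add: newcoord_inv_def)

lemma newcoord_inv_newcoord: "k$1 \<noteq> 0 \<Longrightarrow> newcoord_inv k (newcoord k z) = z"
  by (simp add: newcoord_inv_def newcoord_def vec_eq_iff forall_4 field_simps)

lemma kvec_eq_dPpol: "kvec p q \<mu> z $ i = Re (dPpol p q \<mu> z (axis i 1))"
proof -
  have "Qpol p q \<mu> = (\<lambda>x. Im (\<i> * Ppol p q \<mu> (id x)))" by (simp add: fun_eq_iff Qpol_def)
  then show ?thesis
    using pd_Im_Ppol_linear[OF linear_id, of "\<i>" p q \<mu> i z] by (simp add: kvec_def)
qed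

lemma pd_pd_Rhat:
  fixes p q :: nat and \<mu> :: complex and z :: "real^4"
  defines "k \<equiv> kvec p q \<mu> z"
  defines "s \<equiv> Im (dPpol p q \<mu> z (newcoord_inv k (axis 1 1)))"
  assumes "k$1 \<noteq> 0"
  shows "pd (pd (Rhat p q \<mu> z) j) i (newcoord k z) =
    Im ((1 - \<i> * of_real s) * d2Ppol p q \<mu> z (newcoord_inv k (axis i 1)) (newcoord_inv k (axis j 1)))"
proof -
  have "Rnew p q \<mu> k = (\<lambda>y. Im (1 * Ppol p q \<mu> (newcoord_inv k y)))"
    by (simp add: fun_eq_iff Rnew_def)
  then have "pd (Rnew p q \<mu> k) 1 (newcoord k z) = s"
    using pd_Im_Ppol_linear[of "newcoord_inv k" 1 p q \<mu> 1 "newcoord k z", OF linear_newcoord_inv]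
    by (simp add: s_def newcoord_inv_newcoord[OF assms(3)])
  then have Rhat_eq: "Rhat p q \<mu> z = (\<lambda>y. Im ((1 - \<i> * of_real s) * Ppol p q \<mu> (newcoord_inv k y)))"
    by (simp add: Rhat_def Let_def k_def[symmetric] fun_eq_iff Rnew_def Qnew_def algebra_simps)
  have pd_Rhat: "pd (Rhat p q \<mu> z) j =
      (\<lambda>y. Im ((1 - \<i> * of_real s) * dPpol p q \<mu> (newcoord_inv k y) (newcoord_inv k (axis j 1))))"
    unfolding Rhat_eq by (rule ext, rule pd_Im_Ppol_linear, rule linear_newcoord_inv)
  show ?thesis
    unfolding pd_Rhat
    using pd_Im_dPpol_linear[of "newcoord_inv k" "1 - \<i> * of_real s" p q \<mu> "newcoord_inv k (axis j 1)"
        i "newcoord k z", OF linear_newcoord_inv]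
    by (simp add: newcoord_inv_newcoord[OF assms(3)])
qed

section \<open>Evaluation at a singular point\<close>

lemma det_3_divide:
  fixes a b c d e f g h i y :: real
  assumes "y \<noteq> 0"
  shows "det (vector [vector [a/y, b/y, c/y], vector [d/y, e/y, f/y], vector [g/y, h/y, i/y]] :: real^3^3)
    = (a*(e*i - f*h) - b*(d*i - f*g) + c*(d*h - e*g)) / y^3"
  unfolding det_3 using assms by (simp add: field_simps power3_eq_cube)

lemma Hessian_det_identity:
  fixes p q m r1 r2 C1 S1 C3 S3 e :: real
  assumes "C1 \<noteq> 0" "m \<noteq> 0" "r1 \<noteq> 0" "r2 \<noteq> 0" "C1^2 + S1^2 = 1" "C3^2 + S3^2 = 1" "e^2 = 1"
    and "c2 = -r1*S1/C1" "c3 = e*C3/(m*C1)" "c4 = -e*r2*S3/(m*C1)"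
    and "N11 = m*(p-1)*S1/r1" "N12 = m*(p-1)*C1" "N22 = -m*r1*(p-1)*S1"
    and "N33 = e*(q-1)*S3/r2" "N34 = e*(q-1)*C3" "N44 = -e*r2*(q-1)*S3"
  shows "(c2*c2*N11-2*c2*N12+N22) * ((c3*c3*N11+N33)*(c4*c4*N11+N44) - (c3*c4*N11+N34)*(c3*c4*N11+N34))
       - (c2*c3*N11-c3*N12) * ((c2*c3*N11-c3*N12)*(c4*c4*N11+N44) - (c3*c4*N11+N34)*(c2*c4*N11-c4*N12))
       + (c2*c4*N11-c4*N12) * ((c2*c3*N11-c3*N12)*(c3*c4*N11+N34) - (c3*c3*N11+N33)*(c2*c4*N11-c4*N12))
       = -(p-1)*(q-1)*(e*(p-1)*r2*S3+(q-1)*m*r1*S1)/C1^2"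
  using assms(1-7) unfolding assms(8-16) by (simp add: field_simps) algebra

lemma modulus_condition_powers:
  fixes r :: real
  assumes "n \<ge> 2" and "r > 0" and "real n * r^(n-1) = 1"
  shows "real n * r^n = r" and "real n * real (n-1) * r^(n-2) = (real n - 1) / r"
    and "real n * real n * r^n = real n * r" and "real n * real n * r^(n-1) = real n"
proof -
  obtain k where n: "n = Suc (Suc k)" using assms(1) by (metis add_2_eq_Suc le_Suc_ex)
  show rn: "real n * r^n = r" using assms(3) unfolding n by (simp add: algebra_simps)
  have "r * (real n * r^(n-2)) = 1" using assms(3) unfolding n by (simp add: algebra_simps)
  then have "real n * r^(n-2) = 1 / r" using assms(2) by (simp add: eq_divide_eq mult.commute)
  then have "real (n-1) * (real n * r^(n-2)) = (real n - 1) / r"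
    using assms(1) by (simp add: of_nat_diff)
  then show "real n * real (n-1) * r^(n-2) = (real n - 1) / r" by (simp add: mult_ac)
  show "real n * real n * r^n = real n * r" "real n * real n * r^(n-1) = real n"
    using rn assms(3) by (simp_all add: mult.assoc)
qed

text \<open>\<open>x = (|u\<^sub>0|, arg u\<^sub>0, |v\<^sub>0|, arg v\<^sub>0)\<close>; \<open>t\<^sub>1, t\<^sub>2, t\<^sub>3\<close> stand for \<open>\<Theta>\<^sub>1, \<Theta>\<^sub>2, \<Theta>\<^sub>3\<close>,
  \<open>m\<close> for \<open>|\<mu>|\<close> and \<open>\<epsilon>\<close> for \<open>(-1)\<^sup>\<kappa>\<close>. The phase assumptions are where the relation
  defining \<open>\<kappa>\<close> enters.\<close>

locale polar_critical_point =
  fixes p q :: nat and \<mu> :: complex and x :: "real^4" and m \<epsilon> t1 t2 t3 :: real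
  assumes p_ge_2: "p \<ge> 2" and q_ge_2: "q \<ge> 2"
    and r1_pos: "x$1 > 0" and r2_pos: "x$3 > 0"
    and modulus_u: "real p * (x$1)^(p-1) = 1" and modulus_v: "real q * (x$3)^(q-1) = 1"
    and sign_square: "\<epsilon>^2 = 1"
    and phase_u: "\<mu> * cis (real p * x$2) = of_real m * cis (t2 + t1)"
    and phase_u_cnj: "\<mu> * cis (- x$2) = of_real m * cis (t2 - t1)"
    and phase_v: "cis (real q * x$4) = of_real \<epsilon> * cis (t2 + t3)"
    and phase_v_cnj: "cis (- x$4) = of_real \<epsilon> * cis (t2 - t3)"
begin

text \<open>The Hessian of \<open>Im (e\<^sup>-\<^sup>i\<^sup>t\<^sup>2 P)\<close> in polar coordinates at \<open>x\<close>.\<close>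

definition polar_Hessian_form :: "real^4 \<Rightarrow> real^4 \<Rightarrow> real" where
  "polar_Hessian_form d e =
     d$1*e$1*(m*(real p-1) * sin t1/x$1) + (d$1*e$2+d$2*e$1)*(m*(real p-1) * cos t1) - d$2*e$2*(m*x$1*(real p-1) * sin t1)
   + d$3*e$3*(\<epsilon>*(real q-1) * sin t3/x$3) + (d$3*e$4+d$4*e$3)*(\<epsilon>*(real q-1) * cos t3) - d$4*e$4*(\<epsilon>*x$3*(real q-1) * sin t3)"

lemma phase_factors:
  "\<mu> * cis (real p * x$2) = cis t2 * (of_real m * cis t1)"
  "\<mu> * cis (- x$2) = cis t2 * (of_real m * cnj (cis t1))"
  "cis (real q * x$4) = cis t2 * (of_real \<epsilon> * cis t3)"
  "cis (- x$4) = cis t2 * (of_real \<epsilon> * cnj (cis t3))"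
proof -
  have cis_diff: "cis (a - b) = cis a * cnj (cis b)" for a b
    by (simp add: cis_cnj cis_mult)
  show "\<mu> * cis (real p * x$2) = cis t2 * (of_real m * cis t1)"
    "\<mu> * cis (- x$2) = cis t2 * (of_real m * cnj (cis t1))"
    "cis (real q * x$4) = cis t2 * (of_real \<epsilon> * cis t3)"
    "cis (- x$4) = cis t2 * (of_real \<epsilon> * cnj (cis t3))"
    using phase_u phase_u_cnj phase_v phase_v_cnj
    by (simp_all add: cis_mult[symmetric] cis_diff mult_ac)
qed

lemma dPpol_eq:
  "dPpol p q \<mu> x d = cis t2 * of_real
     (2*m * cos t1 * d$1 - 2*m*x$1 * sin t1 * d$2 + 2*\<epsilon> * cos t3 * d$3 - 2*\<epsilon>*x$3 * sin t3 * d$4)"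
proof -
  define E U V where "E = cis t2" "U = cis t1" "V = cis t3"
  note powers_u = modulus_condition_powers[OF p_ge_2 r1_pos modulus_u]
    and powers_v = modulus_condition_powers[OF q_ge_2 r2_pos modulus_v]
  have "dPpol p q \<mu> x d = E * (of_real m * U * (of_real (d$1) + \<i> * of_real (d$2 * x$1))
      + of_real m * cnj U * (of_real (d$1) + \<i> * of_real (- d$2 * x$1))
      + of_real \<epsilon> * V * (of_real (d$3) + \<i> * of_real (d$4 * x$3))
      + of_real \<epsilon> * cnj V * (of_real (d$3) + \<i> * of_real (- d$4 * x$3)))"
    unfolding dPpol_def phase_factors[folded E_U_V_def] modulus_u modulus_v powers_u powers_v
    by (simp add: ring_distribs mult.assoc)
  also have "\<dots> = E * of_real (d$1 * (2*m*Re U) + d$2 * (-2*m*x$1*Im U) + d$3 * (2*\<epsilon>*Re V) + d$4 * (-2*\<epsilon>*x$3*Im V))"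
    by (simp add: complex_eq_iff algebra_simps)
  finally show ?thesis by (simp add: E_U_V_def algebra_simps)
qed

lemma Im_d2Ppol_eq: "Im (cnj (cis t2) * d2Ppol p q \<mu> x e d) = polar_Hessian_form d e"
proof -
  define r1 r2 E U V where "r1 = x$1" "r2 = x$3" "E = cis t2" "U = cis t1" "V = cis t3"
  have r1: "r1 > 0" and r2: "r2 > 0" using r1_pos r2_pos by (simp_all add: r1_r2_E_U_V_def)
  note powers_u = modulus_condition_powers[OF p_ge_2 r1_pos modulus_u, folded r1_r2_E_U_V_def(1)]
    and powers_v = modulus_condition_powers[OF q_ge_2 r2_pos modulus_v, folded r1_r2_E_U_V_def(2)]
  have "d2Ppol p q \<mu> x e d = E * (of_real m * U * (of_real (d$1*e$1*((real p - 1)/r1) - d$2*e$2*(real p * r1)) + \<i> * of_real ((d$1*e$2 + d$2*e$1)*real p))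
        + of_real m * cnj U * (of_real (- d$2*e$2*r1) + \<i> * of_real (- (d$1*e$2 + d$2*e$1)))
        + of_real \<epsilon> * V * (of_real (d$3*e$3*((real q - 1)/r2) - d$4*e$4*(real q * r2)) + \<i> * of_real ((d$3*e$4 + d$4*e$3)*real q))
        + of_real \<epsilon> * cnj V * (of_real (- d$4*e$4*r2) + \<i> * of_real (- (d$3*e$4 + d$4*e$3))))"
    (is "_ = E * ?Y")
    unfolding d2Ppol_def phase_factors[folded r1_r2_E_U_V_def(3-5)] r1_r2_E_U_V_def(1,2)[symmetric]
      powers_u powers_v
    by (simp add: ring_distribs mult.assoc)
  moreover have "cnj E * E = 1" by (simp add: r1_r2_E_U_V_def cis_cnj cis_mult)
  ultimately have "cnj E * d2Ppol p q \<mu> x e d = ?Y" by (simp add: mult.assoc[symmetric])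
  moreover have "Im ?Y = polar_Hessian_form d e"
    using r1 r2 unfolding polar_Hessian_form_def r1_r2_E_U_V_def(1,2)[symmetric] r1_r2_E_U_V_def(4,5)
    by (simp add: field_simps)
  ultimately show ?thesis by (simp add: r1_r2_E_U_V_def(3))
qed

lemma kvec_eq:
  "kvec p q \<mu> x = cos t2 *\<^sub>R vector [2*m * cos t1, -2*m*x$1 * sin t1, 2*\<epsilon> * cos t3, -2*\<epsilon>*x$3 * sin t3]"
  by (simp add: vec_eq_iff forall_4 kvec_eq_dPpol dPpol_eq)

lemma pd_pd_Rhat_eq:
  assumes k1: "kvec p q \<mu> x $ 1 \<noteq> 0"
  shows "pd (pd (Rhat p q \<mu> x) j) i (newcoord (kvec p q \<mu> x) x) =
    polar_Hessian_form (newcoord_inv (kvec p q \<mu> x) (axis j 1)) (newcoord_inv (kvec p q \<mu> x) (axis i 1)) / cos t2"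
proof -
  have k1_eq: "kvec p q \<mu> x $ 1 = cos t2 * (2*m * cos t1)" by (simp add: kvec_eq)
  with k1 have "cos t2 \<noteq> 0" by auto
  have slope: "Im (dPpol p q \<mu> x (newcoord_inv (kvec p q \<mu> x) (axis 1 1))) = sin t2 / cos t2"
    using k1 unfolding newcoord_inv_axis dPpol_eq k1_eq by simp
  have factor: "1 - \<i> * of_real (sin t2 / cos t2) = of_real (1 / cos t2) * cnj (cis t2)"
    using \<open>cos t2 \<noteq> 0\<close> by (simp add: complex_eq_iff field_simps)
  have Im_real_mult: "Im (of_real r * z) = r * Im z" for r z by simp
  show ?thesis
    unfolding pd_pd_Rhat[OF k1] slope factor mult.assoc Im_real_mult Im_d2Ppol_eq by simp
qed

lemma det_hessRhat:
  assumes k1: "kvec p q \<mu> x $ 1 \<noteq> 0"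
  shows "det (hessRhat p q \<mu> x) = - (4 * (real p - 1) * (real q - 1) * m\<^sup>2)
      / ((kvec p q \<mu> x $ 1)\<^sup>2 * cos t2) * (\<epsilon> * (real p - 1) * x$3 * sin t3 + (real q - 1) * m * x$1 * sin t1)"
proof -
  define k where "k = kvec p q \<mu> x"
  have k: "k$1 = cos t2 * (2*m * cos t1)" "k$2 = cos t2 * (-2*m*x$1 * sin t1)"
    "k$3 = cos t2 * (2*\<epsilon> * cos t3)" "k$4 = cos t2 * (-2*\<epsilon>*x$3 * sin t3)"
    by (simp_all add: k_def kvec_eq)
  have nz: "cos t2 \<noteq> 0" "cos t1 \<noteq> 0" "m \<noteq> 0" using k1 k(1) unfolding k_def by auto
  define c2 c3 c4 where "c2 = k$2/k$1" and "c3 = k$3/k$1" and "c4 = k$4/k$1"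
  define N11 N12 N22 N33 N34 N44 where
    "N11 = m*(real p-1) * sin t1/x$1" and "N12 = m*(real p-1) * cos t1" and "N22 = -m*x$1*(real p-1) * sin t1"
    and "N33 = \<epsilon>*(real q-1) * sin t3/x$3" and "N34 = \<epsilon>*(real q-1) * cos t3" and "N44 = -\<epsilon>*x$3*(real q-1) * sin t3"
  have form: "polar_Hessian_form d e = d$1*e$1*N11 + (d$1*e$2+d$2*e$1)*N12 + d$2*e$2*N22
      + d$3*e$3*N33 + (d$3*e$4+d$4*e$3)*N34 + d$4*e$4*N44" for d e
    by (simp add: polar_Hessian_form_def N11_def N12_def N22_def N33_def N34_def N44_def)
  have "hessRhat p q \<mu> x = vector [
      vector [(c2*c2*N11-2*c2*N12+N22)/cos t2, (c2*c3*N11-c3*N12)/cos t2, (c2*c4*N11-c4*N12)/cos t2],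
      vector [(c2*c3*N11-c3*N12)/cos t2, (c3*c3*N11+N33)/cos t2, (c3*c4*N11+N34)/cos t2],
      vector [(c2*c4*N11-c4*N12)/cos t2, (c3*c4*N11+N34)/cos t2, (c4*c4*N11+N44)/cos t2]]"
    unfolding hessRhat_def Let_def k_def[symmetric] pd_pd_Rhat_eq[OF k1, folded k_def] form
    by (simp add: newcoord_inv_def c2_def c3_def c4_def algebra_simps)
  also have "det \<dots> = (-(real p-1)*(real q-1)*(\<epsilon>*(real p-1)*x$3 * sin t3+(real q-1)*m*x$1 * sin t1)/(cos t1)^2) / (cos t2)^3"
  proof -
    have "c2 = -x$1 * sin t1/cos t1" "c3 = \<epsilon> * cos t3/(m * cos t1)" "c4 = -\<epsilon>*x$3 * sin t3/(m * cos t1)"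
      using nz by (simp_all add: c2_def c3_def c4_def k field_simps)
    from Hessian_det_identity[OF nz(2,3) _ _ sin_cos_squared_add2 sin_cos_squared_add2 sign_square
        this N11_def N12_def N22_def N33_def N34_def N44_def]
    show ?thesis unfolding det_3_divide[OF nz(1)] using r1_pos r2_pos by simp
  qed
  finally have det_eq: "det (hessRhat p q \<mu> x) =
    (-(real p-1)*(real q-1)*(\<epsilon>*(real p-1)*x$3 * sin t3+(real q-1)*m*x$1 * sin t1)/(cos t1)^2) / (cos t2)^3" .
  show ?thesis
    unfolding det_eq k_def[symmetric] k(1) using nz by (simp add: field_simps power2_eq_square power3_eq_cube)
qed

end

lemma polar_phases:
  fixes p q :: nat and \<kappa> :: int and \<mu> :: complex
  assumes \<mu>: "\<mu> = of_real m * cis am"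
    and \<kappa>: "(real p - 1) / 2 * a1 + am = (real q - 1) / 2 * a2 + real_of_int \<kappa> * pi"
  defines "\<Theta> \<equiv> (real p - 1) / 2 * a1 + am" and "\<epsilon> \<equiv> (-1) powi \<kappa> :: real"
  shows "\<mu> * cis (real p * a1) = of_real m * cis (\<Theta> + (real p + 1) / 2 * a1)"
    and "\<mu> * cis (- a1) = of_real m * cis (\<Theta> - (real p + 1) / 2 * a1)"
    and "cis (real q * a2) = of_real \<epsilon> * cis (\<Theta> + (real q + 1) / 2 * a2)"
    and "cis (- a2) = of_real \<epsilon> * cis (\<Theta> - (real q + 1) / 2 * a2)"
proof -
  have "am + real p * a1 = \<Theta> + (real p + 1) / 2 * a1" "am + - a1 = \<Theta> - (real p + 1) / 2 * a1"
    unfolding \<Theta>_def by (simp_all add: field_simps)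
  then show "\<mu> * cis (real p * a1) = of_real m * cis (\<Theta> + (real p + 1) / 2 * a1)"
    "\<mu> * cis (- a1) = of_real m * cis (\<Theta> - (real p + 1) / 2 * a1)"
    unfolding \<mu> mult.assoc cis_mult by simp_all
  have sign: "cis (real_of_int \<kappa> * pi) = of_real \<epsilon>"
    unfolding \<epsilon>_def by (simp add: cis_power_int[symmetric] cis_pi)
  have "\<epsilon> * \<epsilon> = 1" unfolding \<epsilon>_def by (rule power_int_minus_one_mult_self)
  then have sign2: "of_real \<epsilon> * (of_real \<epsilon> * z) = z" for z :: complex
    by (metis mult.assoc mult_1 of_real_1 of_real_mult)
  have args: "\<Theta> + (real q + 1) / 2 * a2 = real_of_int \<kappa> * pi + real q * a2"
    "\<Theta> - (real q + 1) / 2 * a2 = real_of_int \<kappa> * pi + - a2"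
    unfolding \<Theta>_def \<kappa> by (simp_all add: field_simps)
  show "cis (real q * a2) = of_real \<epsilon> * cis (\<Theta> + (real q + 1) / 2 * a2)"
    "cis (- a2) = of_real \<epsilon> * cis (\<Theta> - (real q + 1) / 2 * a2)"
    unfolding args cis_mult[symmetric] sign sign2 by simp_all
qed

theorem proposition3p9:
  fixes p q :: nat and \<mu> u0 v0 :: complex and a1 a2 am :: real and \<kappa> :: int
  assumes "p \<ge> 2" and "q \<ge> 2" and "\<mu> \<noteq> 0"
    and "singular_point p q \<mu> u0 v0"
    and "u0 = of_real (cmod u0) * cis a1"
    and "v0 = of_real (cmod v0) * cis a2"
    and "\<mu> = of_real (cmod \<mu>) * cis am"
    and "(real p - 1) / 2 * a1 + am = (real q - 1) / 2 * a2 + real_of_int \<kappa> * pi"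
    and "kvec p q \<mu> (vector [cmod u0, a1, cmod v0, a2]) $ 1 \<noteq> 0"
  shows "det (hessRhat p q \<mu> (vector [cmod u0, a1, cmod v0, a2])) =
           - (4 * (real p - 1) * (real q - 1) * (cmod \<mu>)\<^sup>2)
             / ((kvec p q \<mu> (vector [cmod u0, a1, cmod v0, a2]) $ 1)\<^sup>2
                * cos ((real p - 1) / 2 * a1 + am))
           * ((-1) powi \<kappa> * (real p - 1) * cmod v0 * sin ((real q + 1) / 2 * a2)
              + (real q - 1) * cmod \<mu> * cmod u0 * sin ((real p + 1) / 2 * a1))"
proof -
  note moduli = singular_point_moduli[OF assms(4,3)]
  have "cmod u0 > 0" "cmod v0 > 0"
    using moduli assms(1,2) by (auto simp: power_0_left)
  then interpret polar_critical_point p q \<mu> "vector [cmod u0, a1, cmod v0, a2]" "cmod \<mu>" "(-1) powi \<kappa>"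
    "(real p + 1) / 2 * a1" "(real p - 1) / 2 * a1 + am" "(real q + 1) / 2 * a2"
    using assms(1,2) moduli polar_phases[OF assms(7,8)]
    by unfold_locales (simp_all add: power2_eq_square)
  show ?thesis using det_hessRhat[OF assms(9)] by simp
qed

end
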